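(* For every $M\in\Lambda^{001}$ the following are equivalent: (1) $M$ is solvable in $\Lambda^{001}$; (2) $M$ is head-normalisable, i.e. $M\longrightarrow_h^* N$ for some $N$ in head normal form; (3) $M$ is solvable in $\Lambda$.
   Context: $\Lambda^{001}$ is the set of possibly infinite λ-terms (trees of variables, abstractions and applications $(M)N$) whose infinite branches all enter infinitely often the argument position $N$ of an application, up to α-equivalence; $\Lambda\subseteq\Lambda^{001}$ is the set of finite λ-terms. $\longrightarrow_\beta$ is one-step β-reduction (contextual closure of $(\lambda x.M)N\to M[N/x]$), $\longrightarrow_\beta^*$ its reflexive-transitive closure. The infinitary reduction $\longrightarrow_\beta^\infty$ is defined by the rules below, with possibly infinite derivations in which every infinite branch passes infinitely often through the third premise of (@): (var) $M\longrightarrow_\beta^* x\Rightarrow M\longrightarrow_\beta^\infty x$; (λ) $M\longrightarrow_\beta^*\lambda x.P$, $P\longrightarrow_\beta^\infty P'$ $\Rightarrow M\longrightarrow_\beta^\infty\lambda x.P'$; (@) $M\longrightarrow_\beta^*(P)Q$, $P\longrightarrow_\beta^\infty P'$, $Q\longrightarrow_\beta^\infty Q'$ $\Rightarrow M\longrightarrow_\beta^\infty(P')Q'$. Head normal forms are terms $\lambda x_1\dots\lambda x_m.(\dots((y)Q_1)\dots)Q_n$; head reduction $\longrightarrow_h$ contracts the redex $(\lambda z.N)P$ of a term $\lambda x_1\dots\lambda x_m.(\dots((\lambda z.N)P)Q_1\dots)Q_n$. A term $M\in\Lambda^{001}$ is solvable in $\Lambda$ (resp. in $\Lambda^{001}$)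 if there exist variables $x_1,\dots,x_m$ and terms $N_1,\dots,N_n\in\Lambda$ (resp. $\in\Lambda^{001}$) such that $(\dots((\lambda x_1\dots\lambda x_m.M)N_1)\dots)N_n\longrightarrow_\beta^*\lambda x.x$ (resp. $\longrightarrow_\beta^\infty\lambda x.x$). *)

theory Defs
  imports Main
begin

codatatype trm = Var nat | Lam trm | App trm trm

primcorec shift :: "nat \<Rightarrow> nat \<Rightarrow> trm \<Rightarrow> trm" where
  "shift d c M = (case M of
      Var i \<Rightarrow> (if i < c then Var i else Var (i + d))
    | Lam P \<Rightarrow> Lam (shift d (Suc c) P)
    | App P Q \<Rightarrow> App (shift d c P) (shift d c Q))"

primcorec subst :: "nat \<Rightarrow> trm \<Rightarrow> trm \<Rightarrow> trm" where
  "subst k N M = (case M of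
      Var i \<Rightarrow> (if i < k then Var i
                 else if i = k then (case N of Var j \<Rightarrow> Var j | Lam P \<Rightarrow> Lam P | App P Q \<Rightarrow> App P Q)
                 else Var (i - 1))
    | Lam P \<Rightarrow> Lam (subst (Suc k) (shift 1 0 N) P)
    | App P Q \<Rightarrow> App (subst k N P) (subst k N Q))"

text \<open>Named abstraction: free variable named i occurs at depth d as Var (i + d).
  absv j d M binds the free variable j (to the new binder), keeping all other names.\<close>
primcorec absv :: "nat \<Rightarrow> nat \<Rightarrow> trm \<Rightarrow> trm" where
  "absv j d M = (case M of
      Var k \<Rightarrow> (if k < d then Var k else if k = d + j then Var d else Var (Suc k))
    | Lam P \<Rightarrow> Lam (absv j (Suc d) P)
    | App P Q \<Rightarrow> App (absv j d P) (absv j d Q))"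

definition abstr :: "nat \<Rightarrow> trm \<Rightarrow> trm" where
  "abstr x M = Lam (absv x 0 M)"

definition abstrs :: "nat list \<Rightarrow> trm \<Rightarrow> trm" where
  "abstrs xs M = foldr abstr xs M"

definition apps :: "trm \<Rightarrow> trm list \<Rightarrow> trm" where
  "apps M Ns = foldl App M Ns"

definition idt :: trm where "idt = Lam (Var 0)"

inductive finite_trm :: "trm \<Rightarrow> bool" where
  "finite_trm (Var i)"
| "finite_trm P \<Longrightarrow> finite_trm (Lam P)"
| "finite_trm P \<Longrightarrow> finite_trm Q \<Longrightarrow> finite_trm (App P Q)"

datatype dir = Body | Fun | Arg

inductive child :: "trm \<Rightarrow> dir \<Rightarrow> trm \<Rightarrow> bool" where
  "child (Lam P) Body P"
| "child (App P Q) Fun P"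
| "child (App P Q) Arg Q"

definition in001 :: "trm \<Rightarrow> bool" where
  "in001 M \<longleftrightarrow> (\<forall>(t :: nat \<Rightarrow> trm) (d :: nat \<Rightarrow> dir).
      t 0 = M \<and> (\<forall>n. child (t n) (d n) (t (Suc n))) \<longrightarrow> infinite {n. d n = Arg})"

inductive beta :: "trm \<Rightarrow> trm \<Rightarrow> bool" where
  redex: "beta (App (Lam M) N) (subst 0 N M)"
| lam: "beta M M' \<Longrightarrow> beta (Lam M) (Lam M')"
| appL: "beta M M' \<Longrightarrow> beta (App M N) (App M' N)"
| appR: "beta N N' \<Longrightarrow> beta (App M N) (App M N')"

abbreviation beta_star :: "trm \<Rightarrow> trm \<Rightarrow> bool" where
  "beta_star \<equiv> beta\<^sup>*\<^sup>*"

text \<open>The inner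
  inductive layer covers rules (var), (lambda) and the first two premises of (@);
  only the third premise of (@) goes through the outer coinductive relation R.\<close>
inductive inf_step :: "(trm \<Rightarrow> trm \<Rightarrow> bool) \<Rightarrow> trm \<Rightarrow> trm \<Rightarrow> bool" for R where
  ivar: "beta_star M (Var x) \<Longrightarrow> inf_step R M (Var x)"
| ilam: "beta_star M (Lam P) \<Longrightarrow> inf_step R P P' \<Longrightarrow> inf_step R M (Lam P')"
| iapp: "beta_star M (App P Q) \<Longrightarrow> inf_step R P P' \<Longrightarrow> R Q Q' \<Longrightarrow> inf_step R M (App P' Q')"

lemma inf_step_mono[mono]:
  "(\<And>x y. R x y \<longrightarrow> S x y) \<Longrightarrow> inf_step R M N \<longrightarrow> inf_step S M N"
proof
  assume h: "\<And>x y. R x y \<longrightarrow> S x y"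
  show "inf_step R M N \<Longrightarrow> inf_step S M N"
    by (induction rule: inf_step.induct) (auto intro: inf_step.intros h[rule_format])
qed

coinductive beta_inf :: "trm \<Rightarrow> trm \<Rightarrow> bool" where
  "inf_step beta_inf M N \<Longrightarrow> beta_inf M N"

inductive hnf_app :: "trm \<Rightarrow> bool" where
  "hnf_app (Var y)"
| "hnf_app P \<Longrightarrow> hnf_app (App P Q)"

inductive hnf :: "trm \<Rightarrow> bool" where
  "hnf_app P \<Longrightarrow> hnf P"
| "hnf P \<Longrightarrow> hnf (Lam P)"

inductive head_app :: "trm \<Rightarrow> trm \<Rightarrow> bool" where
  "head_app (App (Lam N) P) (subst 0 P N)"
| "head_app M M' \<Longrightarrow> head_app (App M Q) (App M' Q)"

inductive head :: "trm \<Rightarrow> trm \<Rightarrow> bool" where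
  "head_app M M' \<Longrightarrow> head M M'"
| "head M M' \<Longrightarrow> head (Lam M) (Lam M')"

definition head_normalisable :: "trm \<Rightarrow> bool" where
  "head_normalisable M \<longleftrightarrow> (\<exists>N. head\<^sup>*\<^sup>* M N \<and> hnf N)"

definition solvable_Lambda :: "trm \<Rightarrow> bool" where
  "solvable_Lambda M \<longleftrightarrow> (\<exists>xs Ns. (\<forall>N\<in>set Ns. finite_trm N) \<and>
      beta_star (apps (abstrs xs M) Ns) idt)"

definition solvable_001 :: "trm \<Rightarrow> bool" where
  "solvable_001 M \<longleftrightarrow> (\<exists>xs Ns. (\<forall>N\<in>set Ns. in001 N) \<and>
      beta_inf (apps (abstrs xs M) Ns) idt)"

end

theory Submission
  imports Defs "HOL-Library.Multiset"
begin

text \<open>A head normal form is closed by abstracting its head variable if it is free; applying it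
  to the term that discards n arguments and returns the identity, once for each of its leading
  abstractions, turns the head into that term, which then consumes the n arguments of the head.
  These arguments are finite, so head normalisable terms are solvable in both senses.

  Conversely, the identity has a type in the system of non-idempotent intersection types, and
  such types are preserved by beta-expansion, so a term that can be solved is typable, and then
  so is M. In this system every head reduction step strictly decreases the size of a typing
  derivation, hence head reduction of a typable term reaches a head normal form. Finally, an
  infinitary reduction to the identity, a finite term without applications, is a finite one.\<close>

lemma shift_Var [simp]: "shift d c (Var i) = (if i < c then Var i else Var (i + d))"
  by (subst shift.code) simp

lemma shift_Lam [simp]: "shift d c (Lam P) = Lam (shift d (Suc c) P)"
  by (subst shift.code) simp

lemma shift_App [simp]: "shift d c (App P Q) = App (shift d c P) (shift d c Q)"
  by (subst shift.code) simp

lemma subst_Var [simp]: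
  "subst k N (Var i) = (if i < k then Var i else if i = k then N else Var (i - 1))"
  by (subst subst.code) (auto split: trm.split)

lemma subst_Lam [simp]: "subst k N (Lam P) = Lam (subst (Suc k) (shift 1 0 N) P)"
  by (subst subst.code) simp

lemma subst_App [simp]: "subst k N (App P Q) = App (subst k N P) (subst k N Q)"
  by (subst subst.code) simp

lemma absv_Var [simp]:
  "absv j d (Var k) = (if k < d then Var k else if k = d + j then Var d else Var (Suc k))"
  by (subst absv.code) simp

lemma absv_Lam [simp]: "absv j d (Lam P) = Lam (absv j (Suc d) P)"
  by (subst absv.code) simp

lemma absv_App [simp]: "absv j d (App P Q) = App (absv j d P) (absv j d Q)"
  by (subst absv.code) simp

lemma apps_Nil [simp]: "apps M [] = M"
  by (simp add: apps_def)

lemma apps_Cons [simp]: "apps M (N # Ns) = apps (App M N) Ns"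
  by (simp add: apps_def)

lemma apps_snoc [simp]: "apps M (Ns @ [N]) = App (apps M Ns) N"
  by (simp add: apps_def)

lemma abstrs_Nil [simp]: "abstrs [] M = M"
  by (simp add: abstrs_def)

lemma abstrs_Cons [simp]: "abstrs (x # xs) M = Lam (absv x 0 (abstrs xs M))"
  by (simp add: abstrs_def abstr_def)

lemma absv_shift: "c \<le> d \<Longrightarrow> absv j (Suc d) (shift 1 c Q) = shift 1 c (absv j d Q)"
proof (coinduction arbitrary: c d Q rule: trm.coinduct_strong)
  case (Eq_trm c d Q)
  then show ?case
  proof (cases Q)
    case (Lam P)
    with Eq_trm show ?thesis by (simp, blast intro: Suc_leI le_imp_less_Suc)
  qed auto
qed

lemma absv_subst:
  "k \<le> d \<Longrightarrow> absv j d (subst k Q P) = subst k (absv j d Q) (absv j (Suc d) P)"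
proof (coinduction arbitrary: k d Q P rule: trm.coinduct_strong)
  case (Eq_trm k d Q P)
  then show ?case
  proof (cases P)
    case (Lam P')
    \<comment> \<open>under the binder the coinduction hypothesis is used at k + 1, d + 1 and shift 1 0 Q\<close>
    with Eq_trm show ?thesis
      by (simp add: absv_shift) (rule disjI1; rule exI[of _ "Suc k"]; rule exI[of _ "Suc d"];
          rule exI[of _ "shift 1 0 Q"]; simp add: absv_shift[unfolded One_nat_def]; blast)
  qed (auto simp: absv_shift)
qed

lemma beta_absv: "beta M M' \<Longrightarrow> beta (absv j d M) (absv j d M')"
proof (induction arbitrary: d rule: beta.induct)
  case (redex M N)
  show ?case
    using beta.redex[of "absv j (Suc d) M" "absv j d N"] by (simp add: absv_subst)
qed (auto intro: beta.intros)

lemma beta_star_Lam: "beta_star M M' \<Longrightarrow> beta_star (Lam M) (Lam M')"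
  by (induction rule: rtranclp_induct) (auto intro: rtranclp.rtrancl_into_rtrancl beta.lam)

lemma beta_star_AppL: "beta_star M M' \<Longrightarrow> beta_star (App M N) (App M' N)"
  by (induction rule: rtranclp_induct) (auto intro: rtranclp.rtrancl_into_rtrancl beta.appL)

lemma beta_star_apps: "beta_star M M' \<Longrightarrow> beta_star (apps M Ns) (apps M' Ns)"
  by (induction Ns arbitrary: M M') (auto intro: beta_star_AppL)

lemma beta_star_absv: "beta_star M M' \<Longrightarrow> beta_star (absv j d M) (absv j d M')"
  by (induction rule: rtranclp_induct) (auto intro: rtranclp.rtrancl_into_rtrancl beta_absv)

lemma beta_star_abstrs: "beta_star M M' \<Longrightarrow> beta_star (abstrs xs M) (abstrs xs M')"
  by (induction xs) (auto intro: beta_star_Lam beta_star_absv)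

lemma beta_star_redex: "beta_star (apps (Lam P) (N # Ns)) (apps (subst 0 N P) Ns)"
  by (auto intro: beta_star_apps beta.redex)

lemma head_app_beta: "head_app M M' \<Longrightarrow> beta M M'"
  by (induction rule: head_app.induct) (auto intro: beta.intros)

lemma head_beta: "head M M' \<Longrightarrow> beta M M'"
  by (induction rule: head.induct) (auto intro: beta.intros head_app_beta)

lemma head_star_beta_star: "head\<^sup>*\<^sup>* M M' \<Longrightarrow> beta_star M M'"
  by (induction rule: rtranclp_induct) (auto intro: rtranclp.rtrancl_into_rtrancl head_beta)

section \<open>Head normal forms are solvable\<close>

definition lams :: "nat \<Rightarrow> trm \<Rightarrow> trm" where
  "lams m B = (Lam ^^ m) B"

lemma lams_0 [simp]: "lams 0 B = B"
  by (simp add: lams_def)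

lemma lams_Suc [simp]: "lams (Suc m) B = Lam (lams m B)"
  by (simp add: lams_def)

lemma shift_lams_idt [simp]: "shift d c (lams n idt) = lams n idt"
  by (induction n arbitrary: c) (auto simp: idt_def)

lemma subst_lams_idt [simp]: "subst k Z (lams n idt) = lams n idt"
  by (induction n arbitrary: k Z) (auto simp: idt_def)

lemma finite_trm_lams_idt: "finite_trm (lams n idt)"
  by (induction n) (auto simp: idt_def intro: finite_trm.intros)

lemma subst_lams:
  "(\<And>c. shift 1 c T = T) \<Longrightarrow> subst k T (lams m B) = lams m (subst (k + m) T B)"
  by (induction m arbitrary: k) auto

lemma subst_apps: "subst k T (apps H Qs) = apps (subst k T H) (map (subst k T) Qs)"
  by (induction Qs arbitrary: H) auto

lemma absv_lams: "absv j d (lams m B) = lams m (absv j (d + m) B)"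
  by (induction m arbitrary: d) auto

lemma absv_apps: "absv j d (apps H Qs) = apps (absv j d H) (map (absv j d) Qs)"
  by (induction Qs arbitrary: H) auto

lemma hnf_app_apps_Var: "hnf_app P \<Longrightarrow> \<exists>y Qs. P = apps (Var y) Qs"
proof (induction rule: hnf_app.induct)
  case (2 P Q)
  then obtain y Qs where "P = apps (Var y) Qs" by blast
  then show ?case by (metis apps_snoc)
qed (metis apps_Nil)

lemma hnf_lams_apps_Var: "hnf N \<Longrightarrow> \<exists>m y Qs. N = lams m (apps (Var y) Qs)"
proof (induction rule: hnf.induct)
  case (1 P)
  then show ?case using hnf_app_apps_Var by (metis lams_0)
next
  case (2 P)
  then show ?case by (metis lams_Suc)
qed

lemma hnf_abstrs_closed:
  "\<exists>xs m' y' Qs'. abstrs xs (lams m (apps (Var y) Qs)) = lams m' (apps (Var y') Qs')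
     \<and> y' < m' \<and> length Qs' = length Qs"
proof (cases "y < m")
  case True
  then show ?thesis by (metis abstrs_Nil)
next
  case False
  then have "abstrs [y - m] (lams m (apps (Var y) Qs))
      = lams (Suc m) (apps (Var m) (map (absv (y - m) m) Qs))"
    by (simp add: absv_lams absv_apps)
  then show ?thesis by (metis lessI length_map)
qed

lemma beta_star_apps_lams_idt: "length Qs = n \<Longrightarrow> beta_star (apps (lams n idt) Qs) idt"
proof (induction Qs arbitrary: n)
  case (Cons Q Qs)
  then obtain n' where n: "n = Suc n'" by (cases n) auto
  have "beta_star (apps (lams n idt) (Q # Qs)) (apps (lams n' idt) Qs)"
    using beta_star_redex[of "lams n' idt" Q Qs] n by simp
  also have "beta_star \<dots> idt" using Cons n by simp
  finally show ?case .
qed simp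

lemma beta_star_apps_replicate_lams_idt:
  assumes "H = lams n idt \<or> (\<exists>y. H = Var y \<and> y < m)"
  shows "\<exists>Qs'. length Qs' = length Qs \<and>
    beta_star (apps (lams m (apps H Qs)) (replicate m (lams n idt))) (apps (lams n idt) Qs')"
  using assms
proof (induction m arbitrary: H Qs)
  case (Suc m)
  let ?T = "lams n idt"
  define H' where "H' = subst m ?T H"
  have H': "H' = ?T \<or> (\<exists>y. H' = Var y \<and> y < m)"
    using Suc.prems unfolding H'_def by (auto simp: less_Suc_eq)
  have "beta_star (apps (lams (Suc m) (apps H Qs)) (replicate (Suc m) ?T))
      (apps (subst 0 ?T (lams m (apps H Qs))) (replicate m ?T))"
    using beta_star_redex[of "lams m (apps H Qs)" ?T "replicate m ?T"] by simp
  also have "subst 0 ?T (lams m (apps H Qs)) = lams m (apps H' (map (subst m ?T) Qs))"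
    by (simp add: subst_lams subst_apps H'_def)
  finally show ?case
    using Suc.IH[OF H', of "map (subst m ?T) Qs"] by (auto intro: rtranclp_trans)
qed auto

lemma beta_star_hnf_apps_idt:
  assumes "y < m"
  shows "beta_star (apps (lams m (apps (Var y) Qs)) (replicate m (lams (length Qs) idt))) idt"
proof -
  obtain Qs' where "length Qs' = length Qs"
    and "beta_star (apps (lams m (apps (Var y) Qs)) (replicate m (lams (length Qs) idt)))
      (apps (lams (length Qs) idt) Qs')"
    using beta_star_apps_replicate_lams_idt[of "Var y" "length Qs" m Qs] assms by auto
  then show ?thesis using beta_star_apps_lams_idt by (metis rtranclp_trans)
qed

lemma head_normalisable_solvable_Lambda:
  assumes "head_normalisable M"
  shows "solvable_Lambda M"
proof -
  obtain N where MN: "head\<^sup>*\<^sup>* M N" and "hnf N"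
    using assms head_normalisable_def by blast
  then obtain m y Qs where "N = lams m (apps (Var y) Qs)"
    using hnf_lams_apps_Var by blast
  then obtain xs m' y' Qs' where N': "abstrs xs N = lams m' (apps (Var y') Qs')"
    and "y' < m'"
    using hnf_abstrs_closed by blast
  let ?Ns = "replicate m' (lams (length Qs') idt)"
  have "beta_star (apps (abstrs xs M) ?Ns) (apps (abstrs xs N) ?Ns)"
    using MN by (intro beta_star_apps beta_star_abstrs head_star_beta_star)
  also have "beta_star \<dots> idt"
    unfolding N' using \<open>y' < m'\<close> by (rule beta_star_hnf_apps_idt)
  finally have "beta_star (apps (abstrs xs M) ?Ns) idt" .
  then show ?thesis
    unfolding solvable_Lambda_def using finite_trm_lams_idt by (metis in_set_replicate)
qed

section \<open>Non-idempotent intersection types\<close>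

lemma sum_list_map_eq_zero: "(\<And>x. x \<in> set xs \<Longrightarrow> f x = 0) \<Longrightarrow> (\<Sum>x\<leftarrow>xs. f x) = 0"
  by (induction xs) auto

lemma image_mset_eq_single: "image_mset f D = {#a#} \<Longrightarrow> \<exists>x. D = {#x#} \<and> f x = a"
  by (metis image_mset_is_empty_iff msed_map_invR)

datatype ty = TV nat | Arr "ty multiset" ty

type_synonym ctx = "nat \<Rightarrow> ty multiset"

type_synonym judgement = "ctx \<times> ty \<times> nat"

abbreviation jctx :: "judgement \<Rightarrow> ctx" where "jctx x \<equiv> fst x"
abbreviation jty :: "judgement \<Rightarrow> ty" where "jty x \<equiv> fst (snd x)"
abbreviation jsize :: "judgement \<Rightarrow> nat" where "jsize x \<equiv> snd (snd x)"

definition ctx_single :: "nat \<Rightarrow> ty \<Rightarrow> ctx" where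
  "ctx_single i A = (\<lambda>j. if j = i then {#A#} else {#})"

abbreviation ctx_app :: "ctx \<Rightarrow> judgement list \<Rightarrow> ctx" where
  "ctx_app G L \<equiv> \<lambda>i. G i + (\<Sum>x\<leftarrow>L. jctx x i)"

text \<open>A context maps each de Bruijn index to the multiset of types at which it is used; the
  last argument of typing is the size of the derivation. In an application the argument is typed
  once for every element of the multiset expected by the function, by the judgements (context,
  type, size) in the list L; when that multiset is empty the argument need not be typable.\<close>
inductive typing :: "ctx \<Rightarrow> trm \<Rightarrow> ty \<Rightarrow> nat \<Rightarrow> bool" where
  var: "typing (ctx_single i A) (Var i) A 1"
| lam: "typing G P B n \<Longrightarrow> typing (\<lambda>i. G (Suc i)) (Lam P) (Arr (G 0) B) (Suc n)"
| app: "typing G P (Arr (mset (map jty L)) B) n \<Longrightarrow>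
    \<forall>x\<in>set L. typing (jctx x) Q (jty x) (jsize x) \<Longrightarrow>
    typing (ctx_app G L) (App P Q) B (Suc (n + (\<Sum>x\<leftarrow>L. jsize x)))"

abbreviation derivable_on :: "judgement set \<Rightarrow> trm \<Rightarrow> bool" where
  "derivable_on S N \<equiv> \<forall>x\<in>S. typing (jctx x) N (jty x) (jsize x)"

definition typable :: "trm \<Rightarrow> bool" where
  "typable M \<longleftrightarrow> (\<exists>G A n. typing G M A n)"

lemma typing_lamI:
  "typing G P B n \<Longrightarrow> G' = (\<lambda>i. G (Suc i)) \<Longrightarrow> A = G 0 \<Longrightarrow> m = Suc n \<Longrightarrow>
    typing G' (Lam P) (Arr A B) m"
  using typing.lam by simp

lemma typing_appI:
  "typing G P (Arr M B) n \<Longrightarrow> M = mset (map jty L) \<Longrightarrow> derivable_on (set L) Q \<Longrightarrow>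
    G' = ctx_app G L \<Longrightarrow> m = Suc (n + (\<Sum>x\<leftarrow>L. jsize x)) \<Longrightarrow>
    typing G' (App P Q) B m"
  using typing.app by simp

inductive_cases typing_LamE: "typing G (Lam P) A n"

lemma typing_AppE:
  assumes "typing G (App P Q) B n"
  obtains G1 L n1 where "G = ctx_app G1 L"
    and "typing G1 P (Arr (mset (map jty L)) B) n1" and "derivable_on (set L) Q"
    and "n = Suc (n1 + (\<Sum>x\<leftarrow>L. jsize x))"
  using assms by (cases rule: typing.cases) auto

definition ctx_shift :: "nat \<Rightarrow> ctx \<Rightarrow> ctx" where
  "ctx_shift c D = (\<lambda>i. if i < c then D i else if i = c then {#} else D (i - 1))"

definition ctx_drop :: "nat \<Rightarrow> ctx \<Rightarrow> ctx" where
  "ctx_drop k G = (\<lambda>i. G (if i < k then i else Suc i))"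

lemma typing_shift: "typing D Q A s \<Longrightarrow> typing (ctx_shift c D) (shift 1 c Q) A s"
proof (induction arbitrary: c rule: typing.induct)
  case (var i A)
  have "ctx_shift c (ctx_single i A) = ctx_single (if i < c then i else Suc i) A"
    by (auto simp: ctx_shift_def ctx_single_def fun_eq_iff)
  then show ?case using typing.var by simp
next
  case (lam G P B n)
  show ?case unfolding shift_Lam
    by (rule typing_lamI[OF lam.IH[of "Suc c"]]) (auto simp: ctx_shift_def fun_eq_iff)
next
  case (app G P L B n Q)
  show ?case unfolding shift_App
    by (rule typing_appI[OF app.IH(1)[of c], where L = "map (\<lambda>x. (ctx_shift c (jctx x), snd x)) L"])
      (use app.IH(2) in \<open>auto simp: ctx_shift_def fun_eq_iff comp_def\<close>)
qed

lemma typing_unshift: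
  "typing D X A s \<Longrightarrow> X = shift 1 c Q \<Longrightarrow> D c = {#} \<and> typing (ctx_drop c D) Q A s"
proof (induction arbitrary: c Q rule: typing.induct)
  case (var i A)
  then obtain j where Q: "Q = Var j" and i: "i = (if j < c then j else Suc j)"
    by (cases Q) (auto split: if_splits)
  have "ctx_drop c (ctx_single i A) = ctx_single j A"
    using i by (auto simp: ctx_drop_def ctx_single_def fun_eq_iff)
  then show ?case using Q i typing.var by (simp add: ctx_single_def)
next
  case (lam G P B n)
  then obtain Q1 where Q: "Q = Lam Q1" and P: "P = shift 1 (Suc c) Q1"
    by (cases Q) (auto split: if_splits)
  from lam.IH[OF P] have "G (Suc c) = {#}" and "typing (ctx_drop (Suc c) G) Q1 B n" by auto
  then show ?case unfolding Q
    by (auto intro!: typing_lamI simp: ctx_drop_def fun_eq_iff)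
next
  case (app G P L B n Q0)
  then obtain Q1 Q2 where Q: "Q = App Q1 Q2" and P: "P = shift 1 c Q1" and Q0: "Q0 = shift 1 c Q2"
    by (cases Q) (auto split: if_splits)
  from app.IH(1)[OF P] have ih1: "G c = {#}" "typing (ctx_drop c G) Q1 (Arr (mset (map jty L)) B) n"
    by auto
  from app.IH(2) Q0
  have ih2: "\<forall>x\<in>set L. jctx x c = {#} \<and> typing (ctx_drop c (jctx x)) Q2 (jty x) (jsize x)"
    by auto
  have "typing (ctx_drop c (ctx_app G L)) (App Q1 Q2) B (Suc (n + (\<Sum>x\<leftarrow>L. jsize x)))"
    by (rule typing_appI[OF ih1(2), where L = "map (\<lambda>x. (ctx_drop c (jctx x), snd x)) L"])
      (use ih2 in \<open>auto simp: ctx_drop_def fun_eq_iff comp_def\<close>)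
  then show ?case using ih1 ih2 Q by (simp add: sum_list_map_eq_zero)
qed

definition ctx_sum :: "judgement multiset \<Rightarrow> ctx" where
  "ctx_sum D = (\<lambda>i. \<Sum>x\<in>#D. jctx x i)"

text \<open>The context of a substitution instance whose variable k is typed by the judgements D.\<close>
abbreviation subst_ctx :: "nat \<Rightarrow> ctx \<Rightarrow> judgement multiset \<Rightarrow> ctx" where
  "subst_ctx k G D \<equiv> \<lambda>i. ctx_drop k G i + ctx_sum D i"

lemma ctx_sum_empty [simp]: "ctx_sum {#} = (\<lambda>i. {#})"
  by (simp add: ctx_sum_def)

lemma ctx_sum_single [simp]: "ctx_sum {#x#} = jctx x"
  by (simp add: ctx_sum_def)

lemma ctx_sum_union [simp]: "ctx_sum (D1 + D2) i = ctx_sum D1 i + ctx_sum D2 i"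
  by (simp add: ctx_sum_def)

lemma typing_subst_Var:
  assumes "image_mset jty D = ctx_single i A k" and "derivable_on (set_mset D) N"
  shows "\<exists>m. typing (subst_ctx k (ctx_single i A) D) (subst k N (Var i)) A m
    \<and> m + size D = 1 + (\<Sum>x\<in>#D. jsize x)"
proof (cases "i = k")
  case True
  then obtain x where x: "D = {#x#}" "jty x = A"
    using assms(1) image_mset_eq_single[of jty D A] by (auto simp: ctx_single_def)
  have "subst_ctx k (ctx_single i A) D = jctx x"
    using True x by (auto simp: ctx_drop_def ctx_single_def fun_eq_iff)
  then show ?thesis using True x assms(2) by auto
next
  case False
  then have D: "D = {#}" using assms(1) by (simp add: ctx_single_def)
  have "subst_ctx k (ctx_single i A) D = ctx_single (if i < k then i else i - 1) A"
    using False D by (auto simp: ctx_drop_def ctx_single_def fun_eq_iff)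
  then show ?thesis using False D typing.var by auto
qed

lemma typing_subst_list:
  assumes "\<forall>x\<in>set L. \<forall>D. image_mset jty D = jctx x k \<longrightarrow> derivable_on (set_mset D) N \<longrightarrow>
      (\<exists>m. typing (subst_ctx k (jctx x) D) (subst k N Q) (jty x) m
        \<and> m + size D = jsize x + (\<Sum>y\<in>#D. jsize y))"
    and "image_mset jty D = (\<Sum>x\<leftarrow>L. jctx x k)"
    and "derivable_on (set_mset D) N"
  shows "\<exists>L'. map jty L' = map jty L \<and> derivable_on (set L') (subst k N Q) \<and>
     (\<forall>i. (\<Sum>x\<leftarrow>L'. jctx x i) = (\<Sum>x\<leftarrow>L. ctx_drop k (jctx x) i) + ctx_sum D i) \<and>
     (\<Sum>x\<leftarrow>L'. jsize x) + size D = (\<Sum>x\<leftarrow>L. jsize x) + (\<Sum>y\<in>#D. jsize y)"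
  using assms
proof (induction L arbitrary: D)
  case (Cons x L)
  from Cons.prems(2) obtain D1 D2 where D: "D = D1 + D2" "jctx x k = image_mset jty D1"
    "(\<Sum>x\<leftarrow>L. jctx x k) = image_mset jty D2"
    by (auto dest: image_mset_eq_plusD)
  from Cons.prems(1) D Cons.prems(3) obtain m where
    m: "typing (subst_ctx k (jctx x) D1) (subst k N Q) (jty x) m"
      "m + size D1 = jsize x + (\<Sum>y\<in>#D1. jsize y)"
    by auto
  from Cons.IH[of D2] Cons.prems D obtain L' where L':
    "map jty L' = map jty L" "derivable_on (set L') (subst k N Q)"
    "\<forall>i. (\<Sum>x\<leftarrow>L'. jctx x i) = (\<Sum>x\<leftarrow>L. ctx_drop k (jctx x) i) + ctx_sum D2 i"
    "(\<Sum>x\<leftarrow>L'. jsize x) + size D2 = (\<Sum>x\<leftarrow>L. jsize x) + (\<Sum>y\<in>#D2. jsize y)"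
    by auto
  show ?case
    using m L' D by (intro exI[of _ "(subst_ctx k (jctx x) D1, jty x, m) # L'"])
      (auto simp: add_ac)
qed simp

text \<open>The size D axioms for the variable k are replaced by the derivations in D.\<close>
lemma typing_subst:
  "typing G P B n \<Longrightarrow> image_mset jty D = G k \<Longrightarrow> derivable_on (set_mset D) N \<Longrightarrow>
    \<exists>m. typing (subst_ctx k G D) (subst k N P) B m
      \<and> m + size D = n + (\<Sum>x\<in>#D. jsize x)"
proof (induction arbitrary: k D N rule: typing.induct)
  case (var i A)
  then show ?case by (rule typing_subst_Var)
next
  case (lam G P B n)
  let ?D = "image_mset (\<lambda>x. (ctx_shift 0 (jctx x), snd x)) D"
  have "image_mset jty ?D = G (Suc k)"
    using lam.prems(1) by (simp add: multiset.map_comp comp_def)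
  moreover have "derivable_on (set_mset ?D) (shift 1 0 N)"
    using lam.prems(2) typing_shift by auto
  ultimately obtain m where
    m: "typing (subst_ctx (Suc k) G ?D) (subst (Suc k) (shift 1 0 N) P) B m"
      "m + size ?D = n + (\<Sum>x\<in>#?D. jsize x)"
    using lam.IH by blast
  have "ctx_sum ?D 0 = {#}" and "ctx_sum ?D (Suc i) = ctx_sum D i" for i
    unfolding ctx_sum_def
    by (auto simp: multiset.map_comp comp_def ctx_shift_def intro!: sum_mset.neutral)
  then show ?case
    using m by (intro exI[of _ "Suc m"])
      (auto intro!: typing_lamI simp: ctx_drop_def fun_eq_iff multiset.map_comp comp_def)
next
  case (app G P L B n Q)
  from app.prems(1) obtain D1 D2 where D: "D = D1 + D2" "G k = image_mset jty D1"
    "(\<Sum>x\<leftarrow>L. jctx x k) = image_mset jty D2"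
    by (auto dest: image_mset_eq_plusD)
  obtain m1 where
    m1: "typing (subst_ctx k G D1) (subst k N P) (Arr (mset (map jty L)) B) m1"
      "m1 + size D1 = n + (\<Sum>x\<in>#D1. jsize x)"
    using app.IH(1)[of D1 k N] D app.prems(2) by auto
  obtain L' where L': "map jty L' = map jty L" "derivable_on (set L') (subst k N Q)"
     "\<forall>i. (\<Sum>x\<leftarrow>L'. jctx x i) = (\<Sum>x\<leftarrow>L. ctx_drop k (jctx x) i) + ctx_sum D2 i"
     "(\<Sum>x\<leftarrow>L'. jsize x) + size D2 = (\<Sum>x\<leftarrow>L. jsize x) + (\<Sum>y\<in>#D2. jsize y)"
    using typing_subst_list[of L k N Q D2] app.IH(2) D app.prems(2) by auto
  have "typing (subst_ctx k (ctx_app G L) D) (subst k N (App P Q)) B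
      (Suc (m1 + (\<Sum>x\<leftarrow>L'. jsize x)))"
    unfolding subst_App
    by (rule typing_appI[OF m1(1), where L = L'])
      (use L' D in \<open>auto simp: ctx_drop_def fun_eq_iff add_ac simp flip: mset_map\<close>)
  then show ?case using m1(2) L'(4) D(1) by auto
qed

abbreviation typing_split :: "ctx \<Rightarrow> nat \<Rightarrow> trm \<Rightarrow> trm \<Rightarrow> ty \<Rightarrow> bool" where
  "typing_split G' k N P B \<equiv> \<exists>G D n. typing G P B n \<and> image_mset jty D = G k \<and>
    derivable_on (set_mset D) N \<and> G' = subst_ctx k G D"

lemma typing_antisubst_Var: "typing G' N B m \<Longrightarrow> typing_split G' k N (Var k) B"
  using typing.var[of k B]
  by (intro exI[of _ "ctx_single k B"] exI[of _ "{#(G', B, m)#}"] exI[of _ 1])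
    (auto simp: ctx_single_def ctx_drop_def fun_eq_iff)

lemma typing_antisubst_Lam:
  assumes "typing_split G0 (Suc k) (shift 1 0 N) P B"
  shows "typing_split (\<lambda>i. G0 (Suc i)) k N (Lam P) (Arr (G0 0) B)"
proof -
  from assms obtain G D n where P: "typing G P B n" "image_mset jty D = G (Suc k)"
    "derivable_on (set_mset D) (shift 1 0 N)" "G0 = subst_ctx (Suc k) G D"
    by blast
  have unshift: "\<forall>x\<in>#D. jctx x 0 = {#} \<and> typing (ctx_drop 0 (jctx x)) N (jty x) (jsize x)"
    using P(3) typing_unshift by blast
  let ?D = "image_mset (\<lambda>x. (ctx_drop 0 (jctx x), snd x)) D"
  have "ctx_sum D 0 = {#}"
    unfolding ctx_sum_def using unshift by (auto intro!: sum_mset.neutral)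
  then have "G0 0 = G 0" using P(4) by (simp add: ctx_drop_def)
  then have "typing (\<lambda>i. G (Suc i)) (Lam P) (Arr (G0 0) B) (Suc n)"
    using typing.lam[OF P(1)] by simp
  moreover have "image_mset jty ?D = G (Suc k)"
    using P(2) by (simp add: multiset.map_comp comp_def)
  moreover have "derivable_on (set_mset ?D) N" using unshift by auto
  moreover have "(\<lambda>i. G0 (Suc i)) = subst_ctx k (\<lambda>i. G (Suc i)) ?D"
    unfolding P(4) fun_eq_iff ctx_drop_def ctx_sum_def by (simp add: multiset.map_comp comp_def)
  ultimately show ?thesis by blast
qed

lemma typing_antisubst_list:
  assumes "\<forall>x\<in>set L. typing_split (jctx x) k N Q (jty x)"
  shows "\<exists>L' D. map jty L' = map jty L \<and> derivable_on (set L') Q \<and>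
    image_mset jty D = (\<Sum>x\<leftarrow>L'. jctx x k) \<and> derivable_on (set_mset D) N \<and>
    (\<forall>i. (\<Sum>x\<leftarrow>L. jctx x i) = (\<Sum>x\<leftarrow>L'. ctx_drop k (jctx x) i) + ctx_sum D i)"
  using assms
proof (induction L)
  case (Cons x L)
  then obtain G D n where x: "typing G Q (jty x) n" "image_mset jty D = G k"
    "derivable_on (set_mset D) N" "jctx x = subst_ctx k G D"
    by auto
  from Cons obtain L' D' where L': "map jty L' = map jty L" "derivable_on (set L') Q"
    "image_mset jty D' = (\<Sum>x\<leftarrow>L'. jctx x k)" "derivable_on (set_mset D') N"
    "\<forall>i. (\<Sum>x\<leftarrow>L. jctx x i) = (\<Sum>x\<leftarrow>L'. ctx_drop k (jctx x) i) + ctx_sum D' i"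
    by auto
  show ?case
    using x L' by (intro exI[of _ "(G, jty x, n) # L'"] exI[of _ "D + D'"]) (auto simp: add_ac)
qed auto

lemma typing_antisubst_App:
  assumes "typing_split G0 k N P (Arr (mset (map jty L)) B)"
    and "\<forall>x\<in>set L. typing_split (jctx x) k N Q (jty x)"
  shows "typing_split (ctx_app G0 L) k N (App P Q) B"
proof -
  from assms(1) obtain G D n where P: "typing G P (Arr (mset (map jty L)) B) n"
    "image_mset jty D = G k" "derivable_on (set_mset D) N" "G0 = subst_ctx k G D"
    by blast
  obtain L' D' where L': "map jty L' = map jty L" "derivable_on (set L') Q"
    "image_mset jty D' = (\<Sum>x\<leftarrow>L'. jctx x k)" "derivable_on (set_mset D') N"
    "\<forall>i. (\<Sum>x\<leftarrow>L. jctx x i) = (\<Sum>x\<leftarrow>L'. ctx_drop k (jctx x) i) + ctx_sum D' i"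
    using typing_antisubst_list[OF assms(2)] by blast
  have "typing (ctx_app G L') (App P Q) B (Suc (n + (\<Sum>x\<leftarrow>L'. jsize x)))"
    using P(1) L'(1,2) by (intro typing_appI) (auto simp flip: mset_map)
  moreover have "ctx_app G0 L = subst_ctx k (ctx_app G L') (D + D')"
    using L'(5) by (auto simp: P(4) ctx_drop_def fun_eq_iff add_ac)
  ultimately show ?thesis using P(2,3) L'(3,4) by (intro exI[of _ "D + D'"] exI) auto
qed

lemma typing_antisubst: "typing G' X B m \<Longrightarrow> X = subst k N P \<Longrightarrow> typing_split G' k N P B"
proof (induction arbitrary: k N P rule: typing.induct)
  case (var i A)
  then obtain j where P: "P = Var j" by (cases P) auto
  show ?case
  proof (cases "j = k")
    case True
    then show ?thesis using typing_antisubst_Var[OF typing.var[of i A], of k] var P by auto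
  next
    case False
    have "ctx_single i A = subst_ctx k (ctx_single j A) {#}"
      using False var P by (auto simp: ctx_drop_def ctx_single_def fun_eq_iff split: if_splits)
    then show ?thesis
      using False P typing.var
      by (intro exI[of _ "ctx_single j A"] exI[of _ "{#}"] exI[of _ 1]) (auto simp: ctx_single_def)
  qed
next
  case (lam G P0 B n)
  show ?case
  proof (cases P)
    case (Var j)
    then have "j = k" "N = Lam P0" using lam.prems by (auto split: if_splits)
    then show ?thesis using typing_antisubst_Var[OF typing.lam[OF lam.hyps], of k] Var by auto
  next
    case (Lam P1)
    then show ?thesis using lam typing_antisubst_Lam by simp
  qed (use lam.prems in simp)
next
  case (app G P0 L B n Q0)
  show ?case
  proof (cases P)
    case (Var j)
    then have "j = k" "N = App P0 Q0" using app.prems by (auto split: if_splits)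
    moreover have "derivable_on (set L) Q0" using app.IH(2) by blast
    ultimately show ?thesis
      using typing_antisubst_Var[OF typing.app[OF app.hyps(1)], of Q0 k] Var by auto
  next
    case (App P1 P2)
    then show ?thesis using app typing_antisubst_App by simp
  qed (use app.prems in simp)
qed

section \<open>Subject expansion and decreasing head reduction\<close>

lemma ctx_sum_mset: "ctx_sum (mset L) = (\<lambda>i. \<Sum>x\<leftarrow>L. jctx x i)"
  by (simp add: ctx_sum_def sum_mset_sum_list flip: mset_map)

lemma typing_beta_expansion: "beta X Y \<Longrightarrow> typing G Y B n \<Longrightarrow> \<exists>n'. typing G X B n'"
proof (induction arbitrary: G B n rule: beta.induct)
  case (redex M N)
  obtain G0 D n0 where M: "typing G0 M B n0" "image_mset jty D = G0 0"
    "derivable_on (set_mset D) N" "G = subst_ctx 0 G0 D"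
    using typing_antisubst[OF redex refl] by blast
  obtain L where L: "mset L = D" using ex_mset by blast
  have "typing G (App (Lam M) N) B (Suc (Suc n0 + (\<Sum>x\<leftarrow>L. jsize x)))"
    using M L by (intro typing_appI[OF typing.lam[OF M(1)]])
      (auto simp: ctx_drop_def ctx_sum_mset fun_eq_iff simp flip: mset_map)
  then show ?case by blast
next
  case (lam M M')
  from lam.prems obtain G0 B0 n0
    where "G = (\<lambda>i. G0 (Suc i))" "B = Arr (G0 0) B0" "typing G0 M' B0 n0"
    by (elim typing_LamE) blast
  then show ?case using lam.IH typing.lam by blast
next
  case (appL M M' N)
  from appL.prems obtain G1 L n1 where G: "G = ctx_app G1 L"
    and "typing G1 M' (Arr (mset (map jty L)) B) n1" and "derivable_on (set L) N"
    by (rule typing_AppE)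
  then show ?case using appL.IH typing.app G by blast
next
  case (appR N N' M)
  from appR.prems obtain G1 L n1 where G: "G = ctx_app G1 L"
    and M: "typing G1 M (Arr (mset (map jty L)) B) n1" and N': "derivable_on (set L) N'"
    by (rule typing_AppE)
  let ?L = "map (\<lambda>x. (jctx x, jty x, SOME n. typing (jctx x) N (jty x) n)) L"
  have "\<forall>x\<in>set L. \<exists>n. typing (jctx x) N (jty x) n" using appR.IH N' by blast
  then have L': "derivable_on (set ?L) N" by (auto intro: someI_ex)
  have "typing G (App M N) B (Suc (n1 + (\<Sum>x\<leftarrow>?L. jsize x)))"
    by (rule typing_appI[OF M, where L = ?L]) (use L' in \<open>auto simp: G comp_def\<close>)
  then show ?case by blast
qed

lemma typing_beta_star_expansion: "beta_star X Y \<Longrightarrow> typing G Y B n \<Longrightarrow> \<exists>n'. typing G X B n'"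
proof (induction arbitrary: n rule: converse_rtranclp_induct)
  case (step X Z)
  then show ?case using typing_beta_expansion by blast
qed blast

lemma typing_head_app_decreases: "head_app X X' \<Longrightarrow> typing G X B n \<Longrightarrow> \<exists>n'<n. typing G X' B n'"
proof (induction arbitrary: G B n rule: head_app.induct)
  case (1 N P)
  from "1" obtain G1 L n1 where G: "G = ctx_app G1 L"
    and "typing G1 (Lam N) (Arr (mset (map jty L)) B) n1" and L: "derivable_on (set L) P"
    and n: "n = Suc (n1 + (\<Sum>x\<leftarrow>L. jsize x))"
    by (rule typing_AppE)
  then obtain G0 n0 where G1: "G1 = (\<lambda>i. G0 (Suc i))" and "G0 0 = mset (map jty L)"
    and N: "typing G0 N B n0" and "n1 = Suc n0"
    by (elim typing_LamE) auto
  then obtain m where "typing (subst_ctx 0 G0 (mset L)) (subst 0 P N) B m"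
    and "m + length L = n0 + (\<Sum>x\<leftarrow>L. jsize x)"
    using typing_subst[OF N, of "mset L" 0 P] L
    by (auto simp: sum_mset_sum_list simp flip: mset_map)
  moreover have "subst_ctx 0 G0 (mset L) = G"
    by (simp add: G G1 ctx_drop_def ctx_sum_mset)
  ultimately show ?case using n \<open>n1 = Suc n0\<close> by (intro exI[of _ m]) auto
next
  case (2 M M' Q)
  from "2.prems" obtain G1 L n1 where G: "G = ctx_app G1 L"
    and M: "typing G1 M (Arr (mset (map jty L)) B) n1" and L: "derivable_on (set L) Q"
    and n: "n = Suc (n1 + (\<Sum>x\<leftarrow>L. jsize x))"
    by (rule typing_AppE)
  obtain n' where "n' < n1" "typing G1 M' (Arr (mset (map jty L)) B) n'"
    using "2.IH"[OF M] by blast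
  then show ?case
    using typing.app[OF _ L] G n by (intro exI[of _ "Suc (n' + (\<Sum>x\<leftarrow>L. jsize x))"]) auto
qed

lemma typing_head_decreases: "head X X' \<Longrightarrow> typing G X B n \<Longrightarrow> \<exists>n'<n. typing G X' B n'"
proof (induction arbitrary: G B n rule: head.induct)
  case (1 M M')
  then show ?case using typing_head_app_decreases by blast
next
  case (2 M M')
  from "2.prems" obtain G0 B0 n0 where "G = (\<lambda>i. G0 (Suc i))" "B = Arr (G0 0) B0"
    "typing G0 M B0 n0" "n = Suc n0"
    by (elim typing_LamE) blast
  then show ?case using "2.IH" typing.lam by (metis not_less_eq)
qed

lemma typing_hnf_or_head: "typing G X B n \<Longrightarrow> hnf X \<or> (\<exists>X'. head X X')"
proof (induction rule: typing.induct)
  case (app G P L B n Q)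
  show ?case
  proof (cases "\<exists>P0. P = Lam P0")
    case True
    then show ?thesis by (auto intro: head.intros head_app.intros)
  next
    case False
    from app.IH(1) show ?thesis
    proof
      assume "hnf P"
      then have "hnf_app P" using False by (cases rule: hnf.cases) auto
      then show ?thesis by (auto intro: hnf.intros hnf_app.intros)
    next
      assume "\<exists>X'. head P X'"
      then obtain P' where "head P P'" by blast
      then have "head_app P P'" using False by (cases rule: head.cases) auto
      then show ?thesis by (auto intro: head.intros head_app.intros)
    qed
  qed
qed (auto intro: hnf.intros hnf_app.intros head.intros)

lemma typing_head_normalisable: "typing G X B n \<Longrightarrow> head_normalisable X"
proof (induction n arbitrary: G X B rule: less_induct)
  case (less n)
  from typing_hnf_or_head[OF less.prems] show ?case
  proof
    assume "hnf X"
    then show ?thesis unfolding head_normalisable_def by blast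
  next
    assume "\<exists>X'. head X X'"
    then obtain X' where X': "head X X'" by blast
    with less obtain n' where "n' < n" "typing G X' B n'" using typing_head_decreases by blast
    then have "head_normalisable X'" using less.IH by blast
    then show ?thesis
      using X' unfolding head_normalisable_def by (meson converse_rtranclp_into_rtranclp)
  qed
qed

section \<open>Solvable terms are head normalisable\<close>

definition absv_index :: "nat \<Rightarrow> nat \<Rightarrow> nat \<Rightarrow> nat" where
  "absv_index j d k = (if k < d then k else if k = d + j then d else Suc k)"

lemma absv_index_inj: "absv_index j d a = absv_index j d b \<Longrightarrow> a = b"
  by (auto simp: absv_index_def split: if_splits)

lemma absv_index_Suc: "absv_index j (Suc d) (Suc i) = Suc (absv_index j d i)"
  by (auto simp: absv_index_def)

lemma absv_index_0: "absv_index j (Suc d) 0 = 0"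
  by (auto simp: absv_index_def)

lemma typing_absvD:
  "typing G X B n \<Longrightarrow> X = absv j d M \<Longrightarrow> typing (\<lambda>i. G (absv_index j d i)) M B n"
proof (induction arbitrary: d M rule: typing.induct)
  case (var i A)
  then obtain k where M: "M = Var k" "absv_index j d k = i"
    by (cases M) (auto simp: absv_index_def split: if_splits)
  then have "(\<lambda>i'. ctx_single i A (absv_index j d i')) = ctx_single k A"
    using absv_index_inj by (auto simp: ctx_single_def fun_eq_iff)
  then show ?case using M typing.var by simp
next
  case (lam G P B n)
  then obtain M1 where M: "M = Lam M1" "P = absv j (Suc d) M1"
    by (cases M) (auto split: if_splits)
  show ?case unfolding M(1)
    by (rule typing_lamI[OF lam.IH[OF M(2)]]) (auto simp: absv_index_Suc absv_index_0)
next
  case (app G P L B n Q)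
  then obtain M1 M2 where M: "M = App M1 M2" "P = absv j d M1" "Q = absv j d M2"
    by (cases M) (auto split: if_splits)
  show ?case unfolding M(1)
    by (rule typing_appI[OF app.IH(1)[OF M(2)],
          where L = "map (\<lambda>x. (\<lambda>i. jctx x (absv_index j d i), snd x)) L"])
      (use app.IH(2) M(3) in \<open>auto simp: comp_def\<close>)
qed

lemma typable_appsD: "typable (apps X Ns) \<Longrightarrow> typable X"
proof (induction Ns arbitrary: X)
  case (Cons N Ns)
  then have "typable (App X N)" by simp
  then show ?case unfolding typable_def by (blast elim: typing_AppE)
qed simp

lemma typable_abstrsD: "typable (abstrs xs M) \<Longrightarrow> typable M"
proof (induction xs)
  case (Cons x xs)
  then obtain G B n where "typing G (absv x 0 (abstrs xs M)) B n"
    unfolding typable_def by (auto elim: typing_LamE)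
  then have "typable (abstrs xs M)" unfolding typable_def using typing_absvD by blast
  then show ?case using Cons.IH by blast
qed simp

lemma typable_head_normalisable: "typable M \<Longrightarrow> head_normalisable M"
  unfolding typable_def using typing_head_normalisable by blast

lemma typable_idt: "typable idt"
  unfolding typable_def idt_def using typing.lam[OF typing.var] by blast

lemma typable_beta_star_expansion: "beta_star X Y \<Longrightarrow> typable Y \<Longrightarrow> typable X"
  unfolding typable_def using typing_beta_star_expansion by blast

lemma reduces_to_idt_head_normalisable:
  "beta_star (apps (abstrs xs M) Ns) idt \<Longrightarrow> head_normalisable M"
  using typable_beta_star_expansion typable_idt typable_appsD typable_abstrsD
    typable_head_normalisable
  by blast

lemma solvable_Lambda_head_normalisable: "solvable_Lambda M \<Longrightarrow> head_normalisable M"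
  unfolding solvable_Lambda_def using reduces_to_idt_head_normalisable by blast

section \<open>Solvability in Lambda and in Lambda^001\<close>

inductive_cases beta_infE: "beta_inf M N"
inductive_cases inf_step_LamE: "inf_step R M (Lam P)"
inductive_cases inf_step_VarE: "inf_step R M (Var x)"

lemma beta_inf_idt_iff: "beta_inf X idt \<longleftrightarrow> beta_star X idt"
proof
  assume "beta_inf X idt"
  then have "inf_step beta_inf X (Lam (Var 0))" unfolding idt_def by (elim beta_infE)
  then obtain P where "beta_star X (Lam P)" and "inf_step beta_inf P (Var 0)"
    by (elim inf_step_LamE) blast
  moreover from this(2) have "beta_star P (Var 0)" by (elim inf_step_VarE)
  ultimately show "beta_star X idt" unfolding idt_def by (meson beta_star_Lam rtranclp_trans)
next
  assume "beta_star X idt"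
  then show "beta_inf X idt"
    unfolding idt_def by (blast intro: beta_inf.intros inf_step.intros)
qed

lemma solvable_001_head_normalisable: "solvable_001 M \<Longrightarrow> head_normalisable M"
  unfolding solvable_001_def beta_inf_idt_iff using reduces_to_idt_head_normalisable by blast

inductive_cases childE: "child M d N"

lemma finite_trm_no_infinite_branch:
  "finite_trm M \<Longrightarrow> t 0 = M \<Longrightarrow> \<forall>n. child (t n) (d n) (t (Suc n)) \<Longrightarrow> False"
proof (induction arbitrary: t d rule: finite_trm.induct)
  case (1 i)
  then show ?case by (metis childE trm.distinct(1,3))
next
  case (2 P)
  from "2.prems" have "child (Lam P) (d 0) (t 1)" by (metis One_nat_def)
  then have "t 1 = P" by (cases rule: child.cases) auto
  then show ?case using "2.IH"[of "\<lambda>n. t (Suc n)" "\<lambda>n. d (Suc n)"] "2.prems" by auto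
next
  case (3 P Q)
  from "3.prems" have "child (App P Q) (d 0) (t 1)" by (metis One_nat_def)
  then have "t 1 = P \<or> t 1 = Q" by (cases rule: child.cases) auto
  then show ?case
    using "3.IH"[of "\<lambda>n. t (Suc n)" "\<lambda>n. d (Suc n)"] "3.prems" by auto
qed

lemma finite_trm_in001: "finite_trm M \<Longrightarrow> in001 M"
  unfolding in001_def using finite_trm_no_infinite_branch by blast

lemma solvable_Lambda_solvable_001: "solvable_Lambda M \<Longrightarrow> solvable_001 M"
  unfolding solvable_Lambda_def solvable_001_def beta_inf_idt_iff
  using finite_trm_in001 by blast

theorem mainTheorem11:
  fixes M :: trm
  assumes "in001 M"
  shows "(solvable_001 M \<longleftrightarrow> head_normalisable M)
       \<and> (head_normalisable M \<longleftrightarrow> solvable_Lambda M)"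
  using solvable_001_head_normalisable solvable_Lambda_head_normalisable
    head_normalisable_solvable_Lambda solvable_Lambda_solvable_001
  by blast

end
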